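(* Let $\mathbb{A}\colon\mathbb{R}^d\to\mathbb{R}^d$ be Lipschitz continuous and monotone, $T>0$, $X_0\in\mathbb{R}^d$, and let $(X,Z)\in\mathcal{C}^1([0,T),\mathbb{R}^{2d})$ be the (unique) solution of \[ \dot X(t)=-Z(t)-\mathbb{A}(X(t)),\qquad \dot Z(t)=-\frac{1}{T-t}Z(t)-\frac{1}{T-t}\mathbb{A}(X(t)),\qquad X(0)=X_0,\ Z(0)=0. \] Then $\Psi(t)=\frac{1}{(T-t)^2}\|\dot X(t)\|^2$ is nonincreasing on $[0,T)$, and for all $t\in[0,T)$, \[ \|\dot Z(t)\|^2=\frac{1}{(T-t)^2}\|\dot X(t)\|^2\le\frac{1}{T^2}\|\mathbb{A}(X_0)\|^2. \]
   Context: Monotone: $\langle\mathbb{A}x-\mathbb{A}y,x-y\rangle\ge0$ for all $x,y$. *)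

theory Defs
  imports "HOL-Analysis.Analysis"
begin

definition monotone_op :: "('a::real_inner \<Rightarrow> 'a) \<Rightarrow> bool" where
  "monotone_op A \<longleftrightarrow> (\<forall>x y. inner (A x - A y) (x - y) \<ge> 0)"

end

theory Submission
  imports Defs
begin

text \<open>
  Since Z' = X' / (T - t) on [0, T), everything reduces to showing that
  Psi(t) = |X'(t)|^2 / (T - t)^2 is nonincreasing; then Psi(t) <= Psi(0) = |A X0|^2 / T^2.
  X' is merely continuous (t |-> A (X t) need not be differentiable), so instead of
  differentiating Psi we bound its upper right Dini derivative. For h > 0 we have
  X'(t + h) = X'(t) - h (q_Z + q_A), where q_Z, q_A, q_X are the difference quotients of
  Z, A o X and X over [t, t + h]. As h -> 0, q_Z -> X'(t) / (T - t) and q_X -> X'(t), while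
  monotonicity gives <q_A, q_X> >= 0 and the Lipschitz bound keeps q_A bounded; hence
  |X'(t + h)|^2 <= (1 - 2h / (T - t)) |X'(t)|^2 + o(h). Together with
  (1 - 2h/p) / (p - h)^2 <= 1 / p^2 this makes the upper right Dini derivative of Psi
  nonpositive, and a continuous function with that property is nonincreasing.
\<close>

lemma has_vector_derivative_imp_tendsto_quotient:
  assumes "(f has_vector_derivative f') (at r within S)"
  shows "((\<lambda>x. (f x - f r) /\<^sub>R (x - r)) \<longlongrightarrow> f') (at r within S)"
proof -
  have "((\<lambda>x. norm (f x - f r - (x - r) *\<^sub>R f') / norm (x - r)) \<longlongrightarrow> 0) (at r within S)"
    using assms by (simp add: has_vector_derivative_def has_derivative_iff_norm)
  moreover have "\<forall>\<^sub>F x in at r within S.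
      norm (f x - f r - (x - r) *\<^sub>R f') / norm (x - r) = norm ((f x - f r) /\<^sub>R (x - r) - f')"
    using eventually_neq_at_within[of r r S]
  proof eventually_elim
    case (elim x)
    then have quotient: "(f x - f r) /\<^sub>R (x - r) - f' = (f x - f r - (x - r) *\<^sub>R f') /\<^sub>R (x - r)"
      by (simp add: scaleR_diff_right)
    show ?case
      unfolding quotient norm_scaleR by (simp add: abs_inverse divide_inverse_commute)
  qed
  ultimately have "((\<lambda>x. norm ((f x - f r) /\<^sub>R (x - r) - f')) \<longlongrightarrow> 0) (at r within S)"
    by (rule Lim_transform_eventually)
  then show ?thesis
    by (rule LIM_zero_cancel[OF tendsto_norm_zero_cancel])
qed

lemma has_vector_derivative_imp_tendsto_quotient_at_right:
  fixes r :: real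
  assumes "(f has_vector_derivative f') (at r within {a..<b})" and "a \<le> r" "r < b"
  shows "((\<lambda>x. (f x - f r) /\<^sub>R (x - r)) \<longlongrightarrow> f') (at_right r)"
proof -
  have "at_right r = at r within {r..(r + b) / 2}"
    using assms by (simp add: at_within_Icc_at_right)
  also have "\<dots> \<le> at r within {a..<b}"
    using assms by (intro at_le) auto
  finally show ?thesis
    using assms(1) by (blast intro: tendsto_mono has_vector_derivative_imp_tendsto_quotient)
qed

lemma continuous_right_nonincreasing_imp_le:
  fixes g :: "real \<Rightarrow> real"
  assumes "a \<le> b" and cont: "continuous_on {a..b} g"
    and right: "\<forall>r\<in>{a..<b}. eventually (\<lambda>x. g x \<le> g r) (at_right r)"
  shows "g b \<le> g a"
proof -
  define K where "K = {x \<in> {a..b}. g x \<le> g a}"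
  define c where "c = Sup K"
  have "closed K"
    unfolding K_def by (rule continuous_on_closed_Collect_le[OF cont continuous_on_const]) auto
  moreover have "a \<in> K" "bdd_above K"
    using \<open>a \<le> b\<close> by (auto simp: K_def bdd_above_def)
  ultimately have "c \<in> K"
    unfolding c_def by (intro closed_contains_Sup) auto
  have "c = b"
  proof (rule ccontr)
    assume "c \<noteq> b"
    with \<open>c \<in> K\<close> have "c \<in> {a..<b}" by (auto simp: K_def)
    then have "eventually (\<lambda>x. c < x \<and> x < b \<and> g x \<le> g c) (at_right c)"
      using right by (auto intro!: eventually_conj eventually_at_right_less
          order_tendstoD(2)[OF tendsto_ident_at])
    then obtain x where "c < x" "x < b" "g x \<le> g c"
      using eventually_happens'[OF trivial_limit_at_right_real] by blast
    with \<open>c \<in> K\<close> have "x \<in> K" by (auto simp: K_def)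
    then have "x \<le> c" unfolding c_def using \<open>bdd_above K\<close> by (rule cSup_upper)
    with \<open>c < x\<close> show False by simp
  qed
  with \<open>c \<in> K\<close> show ?thesis by (simp add: K_def)
qed

lemma upper_right_Dini_nonpos_imp_le:
  fixes \<phi> :: "real \<Rightarrow> real"
  assumes "a \<le> b" and cont: "continuous_on {a..b} \<phi>"
    and Dini: "\<forall>r\<in>{a..<b}. \<forall>\<epsilon>>0. eventually (\<lambda>x. \<phi> x \<le> \<phi> r + \<epsilon> * (x - r)) (at_right r)"
  shows "\<phi> b \<le> \<phi> a"
proof -
  have slope: "\<phi> b \<le> \<phi> a + \<epsilon> * (b - a)" if "\<epsilon> > 0" for \<epsilon>
  proof -
    have "\<phi> b - \<epsilon> * b \<le> \<phi> a - \<epsilon> * a"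
    proof (rule continuous_right_nonincreasing_imp_le[OF \<open>a \<le> b\<close>])
      show "continuous_on {a..b} (\<lambda>x. \<phi> x - \<epsilon> * x)"
        by (intro continuous_intros cont)
      show "\<forall>r\<in>{a..<b}. \<forall>\<^sub>F x in at_right r. \<phi> x - \<epsilon> * x \<le> \<phi> r - \<epsilon> * r"
      proof
        fix r assume "r \<in> {a..<b}"
        with Dini \<open>\<epsilon> > 0\<close> have "\<forall>\<^sub>F x in at_right r. \<phi> x \<le> \<phi> r + \<epsilon> * (x - r)" by blast
        then show "\<forall>\<^sub>F x in at_right r. \<phi> x - \<epsilon> * x \<le> \<phi> r - \<epsilon> * r"
          by eventually_elim (simp add: algebra_simps)
      qed
    qed
    then show ?thesis by (simp add: algebra_simps)
  qed
  show ?thesis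
  proof (cases "a = b")
    case False
    with \<open>a \<le> b\<close> have "b - a > 0" by simp
    show ?thesis
    proof (rule field_le_epsilon)
      fix e :: real assume "e > 0"
      with slope[of "e / (b - a)"] \<open>b - a > 0\<close> show "\<phi> b \<le> \<phi> a + e" by simp
    qed
  qed simp
qed

lemma norm_sq_step_le:
  fixes U v y a :: "'a::real_inner"
  assumes "h \<ge> 0" and "inner a y \<ge> 0" and "norm a \<le> M"
  shows "(norm (U - h *\<^sub>R (v + a)))\<^sup>2 \<le> (1 - 2 * h * c) * (norm U)\<^sup>2
    + h * (2 * norm U * norm (v - c *\<^sub>R U) + 2 * M * norm (y - U) + h * (norm v + M)\<^sup>2)"
proof -
  define w where "w = v + a"
  have expand: "(norm (U - h *\<^sub>R w))\<^sup>2 = (norm U)\<^sup>2 - 2 * h * inner U w + h\<^sup>2 * (norm w)\<^sup>2"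
    unfolding power2_norm_eq_inner
    by (simp add: inner_diff_left inner_diff_right inner_commute power2_eq_square algebra_simps)
  have "inner U v = c * (norm U)\<^sup>2 + inner U (v - c *\<^sub>R U)"
    by (simp add: inner_diff_right power2_norm_eq_inner)
  moreover have "inner U (v - c *\<^sub>R U) \<ge> - (norm U * norm (v - c *\<^sub>R U))"
    using norm_cauchy_schwarz[of "- U" "v - c *\<^sub>R U"] by simp
  moreover have "inner U a = inner a y - inner (y - U) a"
    by (simp add: inner_diff_left inner_diff_right inner_commute[of _ a])
  moreover have "inner (y - U) a \<le> M * norm (y - U)"
    using norm_cauchy_schwarz[of "y - U" a] mult_left_mono[OF \<open>norm a \<le> M\<close>, of "norm (y - U)"]
    by (simp add: mult.commute)
  ultimately have inner_lower: "inner U w \<ge> c * (norm U)\<^sup>2 - norm U * norm (v - c *\<^sub>R U) - M * norm (y - U)"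
    using \<open>inner a y \<ge> 0\<close> by (simp add: w_def inner_add_right)
  have "norm w \<le> norm v + M"
    using norm_triangle_ineq[of v a] \<open>norm a \<le> M\<close> by (simp add: w_def)
  then have norm_upper: "(norm w)\<^sup>2 \<le> (norm v + M)\<^sup>2"
    by (simp add: power_mono)
  have "(norm (U - h *\<^sub>R w))\<^sup>2 \<le> (norm U)\<^sup>2
      - 2 * h * (c * (norm U)\<^sup>2 - norm U * norm (v - c *\<^sub>R U) - M * norm (y - U))
      + h\<^sup>2 * (norm v + M)\<^sup>2"
    unfolding expand using inner_lower norm_upper \<open>h \<ge> 0\<close>
    by (intro add_mono diff_mono mult_left_mono) auto
  then show ?thesis
    by (simp add: w_def algebra_simps power2_eq_square)
qed

lemma one_minus_linear_div_square_le:
  fixes h p :: real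
  assumes "0 < h" and "h < p"
  shows "(1 - 2 * h / p) / (p - h)\<^sup>2 \<le> 1 / p\<^sup>2"
proof -
  have "(1 - 2 * h / p) * p\<^sup>2 \<le> (p - h)\<^sup>2"
    using assms by (simp add: field_simps power2_eq_square)
  then show ?thesis
    using assms by (simp add: field_simps)
qed

lemma monotone_op_inner_quotient_nonneg:
  assumes "monotone_op A"
  shows "inner ((A u - A v) /\<^sub>R h) ((u - v) /\<^sub>R h) \<ge> 0"
proof -
  have rescale: "inner ((A u - A v) /\<^sub>R h) ((u - v) /\<^sub>R h)
      = (inverse h * inverse h) * inner (A u - A v) (u - v)"
    by simp
  show ?thesis
    unfolding rescale using assms unfolding monotone_op_def by (intro mult_nonneg_nonneg[OF zero_le_square]) auto
qed

lemma lipschitz_on_norm_quotient_le: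
  assumes "lipschitz_on L UNIV A"
  shows "norm ((A u - A v) /\<^sub>R h) \<le> L * norm ((u - v) /\<^sub>R h)"
proof -
  have "norm (A u - A v) \<le> L * norm (u - v)"
    using lipschitz_onD[OF assms, of u v] by (simp add: dist_norm)
  then have "\<bar>inverse h\<bar> * norm (A u - A v) \<le> \<bar>inverse h\<bar> * (L * norm (u - v))"
    by (rule mult_left_mono) simp
  then show ?thesis
    by (simp add: ac_simps)
qed

lemma velocity_sq_step_le:
  fixes A :: "'a::real_inner \<Rightarrow> 'a" and X Z X' :: "real \<Rightarrow> 'a"
  assumes lip: "lipschitz_on L UNIV A" and mono: "monotone_op A" and "r < x"
    and ode_x: "X' x = - Z x - A (X x)" and ode_r: "X' r = - Z r - A (X r)"
  defines "qX \<equiv> (X x - X r) /\<^sub>R (x - r)" and "qZ \<equiv> (Z x - Z r) /\<^sub>R (x - r)"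
  shows "(norm (X' x))\<^sup>2 \<le> (1 - 2 * (x - r) * c) * (norm (X' r))\<^sup>2
    + (x - r) * (2 * norm (X' r) * norm (qZ - c *\<^sub>R X' r)
      + 2 * (L * norm qX) * norm (qX - X' r) + (x - r) * (norm qZ + L * norm qX)\<^sup>2)"
proof -
  define a where "a = (A (X x) - A (X r)) /\<^sub>R (x - r)"
  have increment: "(x - r) *\<^sub>R (qZ + a) = (Z x - Z r) + (A (X x) - A (X r))"
    using \<open>r < x\<close> by (simp add: qZ_def a_def scaleR_add_right)
  have X'_x: "X' x = X' r - (x - r) *\<^sub>R (qZ + a)"
    unfolding increment ode_x ode_r by (simp add: algebra_simps)
  have "inner a qX \<ge> 0"
    unfolding a_def qX_def using mono by (rule monotone_op_inner_quotient_nonneg)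
  moreover have "norm a \<le> L * norm qX"
    unfolding a_def qX_def using lip by (rule lipschitz_on_norm_quotient_le)
  ultimately show ?thesis
    unfolding X'_x using \<open>r < x\<close> by (intro norm_sq_step_le) auto
qed

lemma velocity_weighted_upper_right_Dini_bound:
  fixes A :: "'a::real_inner \<Rightarrow> 'a" and X Z X' :: "real \<Rightarrow> 'a"
  assumes lip: "lipschitz_on L UNIV A" and mono: "monotone_op A" and "r < T"
    and X_quot: "((\<lambda>x. (X x - X r) /\<^sub>R (x - r)) \<longlongrightarrow> X' r) (at_right r)"
    and Z_quot: "((\<lambda>x. (Z x - Z r) /\<^sub>R (x - r)) \<longlongrightarrow> (1 / (T - r)) *\<^sub>R X' r) (at_right r)"
    and ode: "\<forall>t\<in>{r..<T}. X' t = - Z t - A (X t)"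
    and "\<epsilon> > 0"
  shows "\<forall>\<^sub>F x in at_right r.
    (norm (X' x))\<^sup>2 / (T - x)\<^sup>2 \<le> (norm (X' r))\<^sup>2 / (T - r)\<^sup>2 + \<epsilon> * (x - r)"
proof -
  define c where "c = 1 / (T - r)"
  define qX where "qX x = (X x - X r) /\<^sub>R (x - r)" for x
  define qZ where "qZ x = (Z x - Z r) /\<^sub>R (x - r)" for x
  define E where "E x = 2 * norm (X' r) * norm (qZ x - c *\<^sub>R X' r)
    + 2 * (L * norm (qX x)) * norm (qX x - X' r) + (x - r) * (norm (qZ x) + L * norm (qX x))\<^sup>2" for x
  have "(E \<longlongrightarrow> 2 * norm (X' r) * norm (c *\<^sub>R X' r - c *\<^sub>R X' r)
    + 2 * (L * norm (X' r)) * norm (X' r - X' r) + (r - r) * (norm (c *\<^sub>R X' r) + L * norm (X' r))\<^sup>2)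
    (at_right r)"
    unfolding E_def qX_def qZ_def c_def by (intro tendsto_intros X_quot Z_quot)
  then have "((\<lambda>x. E x / (T - x)\<^sup>2) \<longlongrightarrow> 0 / (T - r)\<^sup>2) (at_right r)"
    using \<open>r < T\<close> by (intro tendsto_intros) auto
  then have E_small: "\<forall>\<^sub>F x in at_right r. E x / (T - x)\<^sup>2 < \<epsilon>"
    using \<open>\<epsilon> > 0\<close> by (simp add: order_tendstoD(2))
  have near: "\<forall>\<^sub>F x in at_right r. r < x \<and> x < T"
    using \<open>r < T\<close> by (intro eventually_conj eventually_at_right_less order_tendstoD(2)[OF tendsto_ident_at])
  show ?thesis
    using near E_small
  proof eventually_elim
    case (elim x)
    have "(norm (X' x))\<^sup>2 \<le> (1 - 2 * (x - r) * c) * (norm (X' r))\<^sup>2 + (x - r) * E x"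
      unfolding E_def qX_def qZ_def using ode elim
      by (intro velocity_sq_step_le[OF lip mono]) auto
    then have "(norm (X' x))\<^sup>2 / (T - x)\<^sup>2
        \<le> ((1 - 2 * (x - r) * c) * (norm (X' r))\<^sup>2 + (x - r) * E x) / (T - x)\<^sup>2"
      by (simp add: divide_right_mono)
    also have "\<dots> = (1 - 2 * (x - r) / (T - r)) / ((T - r) - (x - r))\<^sup>2 * (norm (X' r))\<^sup>2
        + (x - r) * (E x / (T - x)\<^sup>2)"
      by (simp add: c_def add_divide_distrib)
    also have "\<dots> \<le> 1 / (T - r)\<^sup>2 * (norm (X' r))\<^sup>2 + (x - r) * \<epsilon>"
      using elim one_minus_linear_div_square_le[of "x - r" "T - r"]
      by (intro add_mono mult_right_mono mult_left_mono) auto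
    finally show ?case by (simp add: mult.commute)
  qed
qed

theorem lemmaH3:
  fixes A :: "'a::euclidean_space \<Rightarrow> 'a"
    and X Z X' Z' :: "real \<Rightarrow> 'a"
    and T :: real and X0 :: 'a
  assumes lip: "\<exists>L. lipschitz_on L UNIV A"
    and mono: "monotone_op A"
    and T_pos: "T > 0"
    and X_deriv: "\<forall>t\<in>{0..<T}. (X has_vector_derivative X' t) (at t within {0..<T})"
    and Z_deriv: "\<forall>t\<in>{0..<T}. (Z has_vector_derivative Z' t) (at t within {0..<T})"
    and X'_cont: "continuous_on {0..<T} X'"
    and Z'_cont: "continuous_on {0..<T} Z'"
    and ode_X: "\<forall>t\<in>{0..<T}. X' t = - Z t - A (X t)"
    and ode_Z: "\<forall>t\<in>{0..<T}. Z' t = - (1 / (T - t)) *\<^sub>R Z t - (1 / (T - t)) *\<^sub>R A (X t)"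
    and init_X: "X 0 = X0"
    and init_Z: "Z 0 = 0"
  shows "(\<forall>s t. 0 \<le> s \<and> s \<le> t \<and> t < T \<longrightarrow>
            (1 / (T - t)^2) * (norm (X' t))^2 \<le> (1 / (T - s)^2) * (norm (X' s))^2)
         \<and> (\<forall>t\<in>{0..<T}. (norm (Z' t))^2 = (1 / (T - t)^2) * (norm (X' t))^2
                        \<and> (1 / (T - t)^2) * (norm (X' t))^2 \<le> (1 / T^2) * (norm (A X0))^2)"
proof -
  obtain L where L: "lipschitz_on L UNIV A"
    using lip by blast
  define \<phi> where "\<phi> t = (1 / (T - t)\<^sup>2) * (norm (X' t))\<^sup>2" for t
  have Z'_eq: "Z' t = (1 / (T - t)) *\<^sub>R X' t" if "t \<in> {0..<T}" for t
    using ode_X ode_Z that by (simp add: scaleR_diff_right)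
  have Dini: "\<forall>\<^sub>F x in at_right r. \<phi> x \<le> \<phi> r + \<epsilon> * (x - r)"
    if r: "r \<in> {0..<T}" and "\<epsilon> > 0" for r \<epsilon>
  proof -
    have "((\<lambda>x. (X x - X r) /\<^sub>R (x - r)) \<longlongrightarrow> X' r) (at_right r)"
      using X_deriv r by (intro has_vector_derivative_imp_tendsto_quotient_at_right) auto
    moreover have "((\<lambda>x. (Z x - Z r) /\<^sub>R (x - r)) \<longlongrightarrow> (1 / (T - r)) *\<^sub>R X' r) (at_right r)"
      unfolding Z'_eq[OF r, symmetric] using Z_deriv r
      by (intro has_vector_derivative_imp_tendsto_quotient_at_right) auto
    ultimately show ?thesis
      using velocity_weighted_upper_right_Dini_bound[OF L mono _ _ _ _ \<open>\<epsilon> > 0\<close>] ode_X r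
      by (simp add: \<phi>_def)
  qed
  have antimono: "\<phi> t \<le> \<phi> s" if "0 \<le> s" "s \<le> t" "t < T" for s t
  proof (rule upper_right_Dini_nonpos_imp_le[OF \<open>s \<le> t\<close>])
    have "continuous_on {0..<T} \<phi>"
      unfolding \<phi>_def by (intro continuous_intros X'_cont) auto
    then show "continuous_on {s..t} \<phi>"
      by (rule continuous_on_subset) (use that in auto)
    show "\<forall>r\<in>{s..<t}. \<forall>\<epsilon>>0. \<forall>\<^sub>F x in at_right r. \<phi> x \<le> \<phi> r + \<epsilon> * (x - r)"
      using Dini that by auto
  qed
  have \<phi>_0: "\<phi> 0 = (1 / T\<^sup>2) * (norm (A X0))\<^sup>2"
    using ode_X T_pos by (simp add: \<phi>_def init_X init_Z)
  show ?thesis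
    using antimono antimono[of 0] \<phi>_0 Z'_eq
    by (auto simp: \<phi>_def power_mult_distrib power_divide)
qed

end
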